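(* Let $n,N\ge1$, $\sigma^2>0$, $B_j>0$ ($j\in[N]$), $g_{ij}>0$ and $t_i>0$ ($i\in[n],j\in[N]$). Let $\tilde\gamma>0$ and a partition $0=\gamma_1<\gamma_2<\dots<\gamma_m<\gamma_{m+1}=\tilde\gamma$ be given. Set $b_1=1$, $a_1=\log_2(1+\gamma_2)/\gamma_2$, and for $\ell=2,\dots,m$ $$b_\ell=\frac{\log(\log_2(1+\gamma_{\ell+1}))-\log(\log_2(1+\gamma_\ell))}{\log\gamma_{\ell+1}-\log\gamma_\ell},\qquad a_\ell=e^{\log(\log_2(1+\gamma_{\ell+1}))-b_\ell\log\gamma_{\ell+1}},$$ and $\varphi_\ell(\gamma)=a_\ell\gamma^{b_\ell}$. For $q\in\mathbb{R}^N$ and $u\in\mathbb{R}^{n\times N}$ define, for $\ell\in[m]$, $$\hat f_\ell(q_j,u_{ij})=\log\Big(\frac{\sigma^2}{g_{ij}}e^{-q_j-\frac{u_{ij}}{b_\ell}}+\sum_{k\neq j}\frac{g_{ik}}{g_{ij}}e^{q_k-q_j-\frac{u_{ij}}{b_\ell}}\Big).$$ Put $P_j=e^{q_j}$, $x_{ij}=e^{u_{ij}}$ and $S_{ij}=\frac{P_jg_{ij}}{\sigma^2+\sum_{k\ne j}P_kg_{ik}}$. Then: (i) each $\hat f_\ell$ is a convex function of $(q,u)$; (ii) let $M>0$ and let $\bar z\in\{0,1\}^{n\times N}$ with $\sum_{j=1}^N\bar z_{ij}=N-1$ for all $i$, and $z_{ij}=1-\bar z_{ij}$. Assume $S_{ij}\le\tilde\gamma$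 for all $i,j$. If $$\hat f_\ell(q_j,u_{ij})\le\frac{\log\big(\frac{B_ja_\ell}{t_i}\big)}{b_\ell}+M\bar z_{ij}\quad\text{for all }\ell\in[m],\ i\in[n],\ j\in[N],$$ then $\sum_{j=1}^N x_{ij}B_j\log_2(1+S_{ij})\,z_{ij}\ge t_i$ for all $i\in[n]$; (iii) the conservatism of this approximation vanishes as $m\to\infty$: for any sequence of such partitions of $[0,\tilde\gamma]$ whose maximal subinterval length tends to $0$, $\sup_{\gamma\in[0,\tilde\gamma]}\big(\log_2(1+\gamma)-\min_{\ell\in[m]}\varphi_\ell(\gamma)\big)\to0$.
   Context: $\log$ is the natural logarithm; $[n]=\{1,\dots,n\}$. $P_j$ is the per-resource-block transmit power of base station $j$, $x_{ij}$ the fraction of base station $j$'s bandwidth given to user $i$, $z_{ij}=1$ iff user $i$ is associated with base station $j$, $t_i$ the throughput requirement of user $i$, and $\tilde\gamma$ an upper bound on the SINR. *)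

theory Defs
  imports "HOL-Analysis.Analysis"
begin

definition is_partition :: "real \<Rightarrow> nat \<Rightarrow> (nat \<Rightarrow> real) \<Rightarrow> bool" where
  "is_partition gt m gam \<longleftrightarrow> 1 \<le> m \<and> gam 1 = 0 \<and> gam (m + 1) = gt \<and>
     (\<forall>l\<in>{1..m}. gam l < gam (Suc l))"

definition mesh :: "nat \<Rightarrow> (nat \<Rightarrow> real) \<Rightarrow> real" where
  "mesh m gam = Max ((\<lambda>l. gam (Suc l) - gam l) ` {1..m})"

definition bcoef :: "(nat \<Rightarrow> real) \<Rightarrow> nat \<Rightarrow> real" where
  "bcoef gam l = (if l = 1 then 1 else
     (ln (log 2 (1 + gam (l + 1))) - ln (log 2 (1 + gam l))) / (ln (gam (l + 1)) - ln (gam l)))"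

definition acoef :: "(nat \<Rightarrow> real) \<Rightarrow> nat \<Rightarrow> real" where
  "acoef gam l = (if l = 1 then log 2 (1 + gam 2) / gam 2 else
     exp (ln (log 2 (1 + gam (l + 1))) - bcoef gam l * ln (gam (l + 1))))"

definition phi :: "(nat \<Rightarrow> real) \<Rightarrow> nat \<Rightarrow> real \<Rightarrow> real" where
  "phi gam l g = acoef gam l * g powr bcoef gam l"

definition fhat :: "real \<Rightarrow> ('n \<Rightarrow> 'N::finite \<Rightarrow> real) \<Rightarrow> real \<Rightarrow> real^'N \<Rightarrow> real^'N^'n \<Rightarrow> 'n \<Rightarrow> 'N \<Rightarrow> real" where
  "fhat sigma2 g b q u i j =
     ln (sigma2 / g i j * exp (- (q $ j) - (u $ i $ j) / b)
         + (\<Sum>k\<in>UNIV - {j}. g i k / g i j * exp (q $ k - q $ j - (u $ i $ j) / b)))"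

definition sinr :: "real \<Rightarrow> ('n \<Rightarrow> 'N::finite \<Rightarrow> real) \<Rightarrow> ('N \<Rightarrow> real) \<Rightarrow> 'n \<Rightarrow> 'N \<Rightarrow> real" where
  "sinr sigma2 g P i j = P j * g i j / (sigma2 + (\<Sum>k\<in>UNIV - {j}. P k * g i k))"

end

theory Submission
  imports Defs
begin

text \<open>
  (i) Each fhat is the logarithm of a sum of exponentials of affine functions of (q, u),
  hence convex.

  (ii) With P = exp q, fhat equals -u_ij / b_l - ln S_ij, so for a pair with zbar_ij = 0
  (every user has one) the l-th constraint says exactly t_i \<le> exp u_ij * B_j * phi_l S_ij.
  Each phi_l is a chord, through its nodes gam l and gam (l + 1), of a concave function:
  for l = 1 of log2 (1 + x) itself, for l \<ge> 2 of s \<mapsto> ln (log2 (1 + exp s)) in log-log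
  coordinates. Hence phi_l \<le> log2 (1 + x) on the cell [gam l, gam (l + 1)], and the cell
  containing S_ij gives the rate bound.

  (iii) Off its cell a chord lies above the curve, and on its cell phi_l is increasing and
  agrees with log2 (1 + x) at gam l. So log2 (1 + x) - phi_l x is at most the increase of
  log2 (1 + x) over one cell, hence at most mesh / ln 2.
\<close>

section \<open>Chords of concave functions\<close>

definition secant :: "(real \<Rightarrow> real) \<Rightarrow> real \<Rightarrow> real \<Rightarrow> real \<Rightarrow> real" where
  "secant f a b x = f a + (f b - f a) / (b - a) * (x - a)"

lemma secant_left [simp]: "secant f a b a = f a"
  by (simp add: secant_def)

lemma concave_on_secant_le:
  fixes f :: "real \<Rightarrow> real"
  assumes "concave_on C f" "a \<in> C" "b \<in> C" "x \<in> {a..b}"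
  shows "secant f a b x \<le> f x"
proof -
  have "{a..b} \<subseteq> C"
    using assms concave_on_imp_convex closed_segment_eq_real_ivl
    by (metis atLeastatMost_empty' convex_contains_segment empty_subsetI)
  then have "concave_on {a..b} f"
    using assms(1) by (simp add: concave_on_def convex_on_subset)
  then show ?thesis
    using concave_onD_Icc'[of a b f x] assms(4) by (simp add: secant_def algebra_simps)
qed

lemma concave_on_le_secant:
  fixes f :: "real \<Rightarrow> real"
  assumes f: "concave_on C f" and C: "a \<in> C" "b \<in> C" "x \<in> C"
    and ab: "a < b" and x: "x \<le> a \<or> b \<le> x"
  shows "f x \<le> secant f a b x"
proof -
  consider "x < a" | "x = a" | "b \<le> x"
    using x by linarith
  then show ?thesis
  proof cases
    case 1
    then have "secant f x b a \<le> f a"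
      using concave_on_secant_le[OF f C(3,2)] ab by simp
    moreover have "b - x > 0" "b - a > 0"
      using 1 ab by simp_all
    ultimately show ?thesis
      by (simp add: secant_def field_simps)
  next
    case 3
    then have "secant f a x b \<le> f b"
      using concave_on_secant_le[OF f C(1,3)] ab by simp
    moreover have "x - a > 0" "b - a > 0"
      using 3 ab by simp_all
    ultimately show ?thesis
      by (simp add: secant_def field_simps)
  qed simp
qed

lemma concave_on_log_one_plus:
  fixes b :: real
  assumes "b > 1"
  shows "concave_on {0..} (\<lambda>x. log b (1 + x))"
  using assms
  by (intro f''_le0_imp_concave derivative_eq_intros | simp add: add_pos_nonneg)+

lemma concave_on_ln_ln_one_plus_exp: "concave_on UNIV (\<lambda>s::real. ln (ln (1 + exp s)))"
proof (rule f''_le0_imp_concave[where f' = "\<lambda>s. exp s / ((1 + exp s) * ln (1 + exp s))"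
   and f'' = "\<lambda>s. exp s * (ln (1 + exp s) - exp s) / ((1 + exp s) * ln (1 + exp s))\<^sup>2"])
  fix x :: real
  have pos: "ln (1 + exp x) > 0" "1 + exp x > 0"
    by (simp_all add: add_pos_pos)
  show "((\<lambda>s. ln (ln (1 + exp s))) has_real_derivative exp x / ((1 + exp x) * ln (1 + exp x))) (at x)"
    by (rule derivative_eq_intros refl | (use pos in simp; fail))+
  show "((\<lambda>s. exp s / ((1 + exp s) * ln (1 + exp s))) has_real_derivative
      exp x * (ln (1 + exp x) - exp x) / ((1 + exp x) * ln (1 + exp x))\<^sup>2) (at x)"
    apply (rule derivative_eq_intros refl | (use pos in simp; fail))+
    using pos by (simp add: divide_simps power2_eq_square) (simp add: algebra_simps)
  have "ln (1 + exp x) \<le> exp x"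
    using ln_add_one_self_le_self[of "exp x"] by simp
  then show "exp x * (ln (1 + exp x) - exp x) / ((1 + exp x) * ln (1 + exp x))\<^sup>2 \<le> 0"
    by (intro divide_nonpos_nonneg mult_nonneg_nonpos) auto
qed auto

lemma concave_on_ln_log_one_plus_exp:
  fixes b :: real
  assumes "b > 1"
  shows "concave_on UNIV (\<lambda>s. ln (log b (1 + exp s)))"
proof -
  have "ln (log b (1 + exp s)) = ln (ln (1 + exp s)) - ln (ln b)" for s
    using assms by (simp add: log_def ln_div add_pos_pos)
  then show ?thesis
    using concave_on_diff[OF concave_on_ln_ln_one_plus_exp, of "\<lambda>_. ln (ln b)"]
    by (simp add: convex_on_const)
qed

section \<open>Log-sum-exp of affine functions\<close>

lemma convex_on_ln_sum_exp_affine: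
  fixes E :: "'k \<Rightarrow> 'a::real_vector \<Rightarrow> real"
  assumes "finite K" "K \<noteq> {}"
    and affine: "\<And>k x y t. k \<in> K \<Longrightarrow> E k ((1 - t) *\<^sub>R x + t *\<^sub>R y) = (1 - t) * E k x + t * E k y"
  shows "convex_on UNIV (\<lambda>p. ln (\<Sum>k\<in>K. exp (E k p)))"
proof (rule convex_onI)
  fix t :: real and x y :: 'a
  assume t: "0 < t" "t < 1"
  define F where "F p = (\<Sum>k\<in>K. exp (E k p))" for p
  have F_pos: "0 < F p" for p
    unfolding F_def using assms(1,2) by (simp add: sum_pos)
  define W where "W = exp ((1 - t) * ln (F x) + t * ln (F y))"
  \<comment> \<open>convexity of exp on each term normalised by F x resp. F y; the normalised terms sum to 1\<close>
  have "exp ((1 - t) * E k x + t * E k y) \<le> W * ((1 - t) * exp (E k x) / F x + t * exp (E k y) / F y)" for k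
  proof -
    have "exp ((1 - t) * E k x + t * E k y) = W * exp ((1 - t) * (E k x - ln (F x)) + t * (E k y - ln (F y)))"
      by (simp add: W_def algebra_simps flip: exp_add)
    also have "\<dots> \<le> W * ((1 - t) * exp (E k x - ln (F x)) + t * exp (E k y - ln (F y)))"
      using convex_onD[OF exp_convex, of t "E k x - ln (F x)" "E k y - ln (F y)"] t
      by (simp add: W_def)
    also have "\<dots> = W * ((1 - t) * exp (E k x) / F x + t * exp (E k y) / F y)"
      using F_pos[of x] F_pos[of y] by (simp add: exp_diff)
    finally show ?thesis .
  qed
  then have "F ((1 - t) *\<^sub>R x + t *\<^sub>R y) \<le> (\<Sum>k\<in>K. W * ((1 - t) * exp (E k x) / F x + t * exp (E k y) / F y))"
    unfolding F_def by (simp add: affine sum_mono)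
  also have "\<dots> = W * ((1 - t) / F x * F x + t / F y * F y)"
    unfolding F_def by (simp add: algebra_simps sum_distrib_left sum.distrib sum_divide_distrib)
  also have "\<dots> = W"
    using F_pos[of x] F_pos[of y] by simp
  finally show "ln (F ((1 - t) *\<^sub>R x + t *\<^sub>R y)) \<le> (1 - t) * ln (F x) + t * ln (F y)"
    using F_pos by (metis W_def exp_gt_zero ln_exp ln_le_cancel_iff)
qed simp

section \<open>The piecewise power approximation of the rate\<close>

lemma is_partition_less:
  assumes part: "is_partition gt m gam" and "1 \<le> i" "i < j" "j \<le> m + 1"
  shows "gam i < gam j"
  using assms(3,4)
proof (induction j)
  case (Suc j)
  have "gam j < gam (Suc j)"
    using part \<open>1 \<le> i\<close> Suc.prems unfolding is_partition_def by auto
  then show ?case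
    using Suc by (cases "i = j") auto
qed simp

lemma is_partition_pos:
  assumes "is_partition gt m gam" "2 \<le> l" "l \<le> m + 1"
  shows "0 < gam l"
  using is_partition_less[OF assms(1), of 1 l] assms unfolding is_partition_def by auto

lemma is_partition_nonneg:
  assumes "is_partition gt m gam" "1 \<le> l" "l \<le> m + 1"
  shows "0 \<le> gam l"
  using is_partition_pos[OF assms(1), of l] assms unfolding is_partition_def
  by (cases "l = 1") auto

lemma ex_cell_containing:
  fixes gam :: "nat \<Rightarrow> real"
  assumes "1 \<le> m" "gam 1 \<le> x" "x \<le> gam (m + 1)"
  shows "\<exists>l\<in>{1..m}. gam l \<le> x \<and> x \<le> gam (Suc l)"
  using assms
proof (induction m)
  case (Suc m)
  show ?case
  proof (cases "m \<noteq> 0 \<and> x \<le> gam (m + 1)")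
    case True
    then show ?thesis
      using Suc by force
  next
    case False
    then show ?thesis
      using Suc.prems by (intro bexI[of _ "Suc m"]) auto
  qed
qed simp

definition loglog_rate :: "real \<Rightarrow> real" where
  "loglog_rate s = ln (log 2 (1 + exp s))"

lemma concave_on_loglog_rate: "concave_on UNIV loglog_rate"
  unfolding loglog_rate_def by (rule concave_on_ln_log_one_plus_exp) simp

lemma exp_loglog_rate_ln: "x > 0 \<Longrightarrow> exp (loglog_rate (ln x)) = log 2 (1 + x)"
  by (simp add: loglog_rate_def)

lemma phi_first_eq_secant:
  assumes "is_partition gt m gam" "0 \<le> x"
  shows "phi gam 1 x = secant (\<lambda>x. log 2 (1 + x)) (gam 1) (gam 2) x"
  using assms by (simp add: is_partition_def phi_def acoef_def bcoef_def secant_def)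

lemma phi_eq_exp_secant:
  assumes part: "is_partition gt m gam" and l: "l \<in> {2..m}" and "0 < x"
  shows "phi gam l x = exp (secant loglog_rate (ln (gam l)) (ln (gam (Suc l))) (ln x))"
proof -
  have pos: "0 < gam l" "0 < gam (Suc l)"
    using is_partition_pos[OF part] l by auto
  define \<alpha> where "\<alpha> = ln (gam l)"
  define \<beta> where "\<beta> = ln (gam (Suc l))"
  define c where "c = bcoef gam l"
  have c: "c = (loglog_rate \<beta> - loglog_rate \<alpha>) / (\<beta> - \<alpha>)"
    using l pos by (simp add: c_def \<alpha>_def \<beta>_def bcoef_def loglog_rate_def)
  have "\<beta> - \<alpha> \<noteq> 0"
    using is_partition_less[OF part, of l "Suc l"] l pos by (auto simp: \<alpha>_def \<beta>_def)
  then have "c * (\<beta> - \<alpha>) = loglog_rate \<beta> - loglog_rate \<alpha>"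
    unfolding c by simp
  then have "secant loglog_rate \<alpha> \<beta> s = loglog_rate \<beta> - c * \<beta> + c * s" for s
    unfolding secant_def c[symmetric] by (simp add: algebra_simps)
  moreover have "phi gam l x = exp (loglog_rate \<beta> - c * \<beta> + c * ln x)"
    using l pos \<open>0 < x\<close>
    by (simp add: phi_def acoef_def c_def \<beta>_def loglog_rate_def powr_def exp_add)
  ultimately show ?thesis
    by (simp add: \<alpha>_def \<beta>_def)
qed

lemma bcoef_pos:
  assumes part: "is_partition gt m gam" and l: "l \<in> {1..m}"
  shows "0 < bcoef gam l"
proof (cases "l = 1")
  case False
  have "0 < gam l" "gam l < gam (Suc l)"
    using is_partition_pos[OF part] is_partition_less[OF part, of l "Suc l"] l False by auto
  then have "ln (log 2 (1 + gam l)) < ln (log 2 (1 + gam (l + 1)))" "ln (gam l) < ln (gam (l + 1))"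
    by simp_all
  then show ?thesis
    using False by (simp add: bcoef_def)
qed (simp add: bcoef_def)

lemma acoef_pos:
  assumes part: "is_partition gt m gam"
  shows "0 < acoef gam l"
  using is_partition_pos[OF part, of 2] part by (simp add: acoef_def is_partition_def)

lemma phi_mono:
  assumes "is_partition gt m gam" "l \<in> {1..m}" "0 \<le> x" "x \<le> y"
  shows "phi gam l x \<le> phi gam l y"
  using assms acoef_pos[OF assms(1), of l] bcoef_pos[OF assms(1,2)]
  by (simp add: phi_def powr_mono2)

lemma phi_at_lower_node:
  assumes part: "is_partition gt m gam" and l: "l \<in> {1..m}"
  shows "phi gam l (gam l) = log 2 (1 + gam l)"
proof (cases "l = 1")
  case True
  then show ?thesis
    using part by (simp add: is_partition_def phi_def)
next
  case False
  then have "0 < gam l"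
    using is_partition_pos[OF part] l by simp
  then show ?thesis
    using phi_eq_exp_secant[OF part, of l] l False by (simp add: exp_loglog_rate_ln)
qed

lemma phi_le_log2:
  assumes part: "is_partition gt m gam" and l: "l \<in> {1..m}"
    and x: "gam l \<le> x" "x \<le> gam (Suc l)"
  shows "phi gam l x \<le> log 2 (1 + x)"
proof (cases "l = 1")
  case True
  have "0 \<le> gam 1"
    using part by (simp add: is_partition_def)
  then show ?thesis
    using concave_on_secant_le[OF concave_on_log_one_plus, of 2 "gam 1" "gam 2" x]
      phi_first_eq_secant[OF part, of x] x True by (simp add: numeral_2_eq_2)
next
  case False
  then have "0 < gam l"
    using is_partition_pos[OF part] l by simp
  with x have "0 < x" "secant loglog_rate (ln (gam l)) (ln (gam (Suc l))) (ln x) \<le> loglog_rate (ln x)"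
    using concave_on_secant_le[OF concave_on_loglog_rate, of "ln (gam l)" "ln (gam (Suc l))" "ln x"]
    by simp_all
  then show ?thesis
    using phi_eq_exp_secant[OF part, of l x] l False \<open>0 < x\<close>
    by (simp flip: exp_loglog_rate_ln)
qed

lemma log2_le_phi:
  assumes part: "is_partition gt m gam" and l: "l \<in> {1..m}"
    and x: "0 \<le> x" "x \<le> gam l \<or> gam (Suc l) \<le> x"
  shows "log 2 (1 + x) \<le> phi gam l x"
proof -
  have less: "gam l < gam (Suc l)"
    using is_partition_less[OF part, of l "Suc l"] l by simp
  consider "l = 1" | "x = 0" | "l \<noteq> 1" "0 < x"
    using x by linarith
  then show ?thesis
  proof cases
    case 1
    then show ?thesis
      using concave_on_le_secant[OF concave_on_log_one_plus, of 2 "gam 1" "gam 2" x]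
        phi_first_eq_secant[OF part x(1)] part x less
      by (simp add: is_partition_def numeral_2_eq_2)
  next
    case 2
    then show ?thesis
      by (simp add: phi_def)
  next
    case 3
    have "0 < gam l"
      using is_partition_pos[OF part] l 3 by simp
    then have "loglog_rate (ln x) \<le> secant loglog_rate (ln (gam l)) (ln (gam (Suc l))) (ln x)"
      using concave_on_le_secant[OF concave_on_loglog_rate, of "ln (gam l)" "ln (gam (Suc l))" "ln x"]
        x less 3
      by simp
    then show ?thesis
      using phi_eq_exp_secant[OF part, of l x] l 3
      by (simp flip: exp_loglog_rate_ln)
  qed
qed

section \<open>The approximated throughput constraints\<close>

lemma fhat_convex:
  fixes g :: "'n::finite \<Rightarrow> 'N::finite \<Rightarrow> real"
  assumes "0 < sigma2" "\<And>i j. 0 < g i j"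
  shows "convex_on UNIV (\<lambda>p :: (real^'N) \<times> (real^'N^'n). fhat sigma2 g b (fst p) (snd p) i j)"
proof -
  \<comment> \<open>the noise term takes the slot k = j, which is missing from the interference sum\<close>
  define E where "E k p = (if k = j then ln (sigma2 / g i j) else ln (g i k / g i j) + fst p $ k)
      - fst p $ j - snd p $ i $ j / b" for k and p :: "(real^'N) \<times> (real^'N^'n)"
  have "fhat sigma2 g b (fst p) (snd p) i j = ln (\<Sum>k\<in>UNIV. exp (E k p))" for p
    using assms
    by (simp add: fhat_def E_def sum.remove[of UNIV j] exp_add exp_diff exp_minus field_simps)
  moreover have "convex_on UNIV (\<lambda>p. ln (\<Sum>k\<in>UNIV. exp (E k p)))"
    by (rule convex_on_ln_sum_exp_affine)
      (auto simp: E_def algebra_simps add_divide_distrib diff_divide_distrib)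
  ultimately show ?thesis
    by simp
qed

lemma fhat_eq_minus_ln_sinr:
  fixes g :: "'n::finite \<Rightarrow> 'N::finite \<Rightarrow> real"
  assumes sigma_pos: "0 < sigma2" and g_pos: "\<And>i j. 0 < g i j"
  shows "fhat sigma2 g b q u i j = - (u $ i $ j / b) - ln (sinr sigma2 g (\<lambda>k. exp (q $ k)) i j)"
proof -
  define D where "D = sigma2 + (\<Sum>k\<in>UNIV - {j}. exp (q $ k) * g i k)"
  have D_pos: "0 < D"
    unfolding D_def using sigma_pos g_pos by (intro add_pos_nonneg sum_nonneg) (auto intro: less_imp_le)
  have "sigma2 / g i j * exp (- q $ j - u $ i $ j / b)
      + (\<Sum>k\<in>UNIV - {j}. g i k / g i j * exp (q $ k - q $ j - u $ i $ j / b))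
      = exp (- (u $ i $ j / b)) / sinr sigma2 g (\<lambda>k. exp (q $ k)) i j"
    using D_pos g_pos[of i j]
    by (simp add: sinr_def D_def[symmetric] exp_add exp_diff exp_minus field_simps sum_divide_distrib sum_distrib_left)
  then show ?thesis
    using D_pos g_pos[of i j] by (simp add: fhat_def sinr_def D_def[symmetric] ln_div ln_mult)
qed

lemma sinr_pos:
  assumes "0 < sigma2" "\<And>i j. 0 < g i j" "\<And>k. 0 < P k"
  shows "0 < sinr sigma2 g P i j"
  unfolding sinr_def using assms
  by (intro divide_pos_pos mult_pos_pos add_pos_nonneg sum_nonneg) (auto intro: less_imp_le)

lemma demand_le_rate:
  fixes g :: "'n::finite \<Rightarrow> 'N::finite \<Rightarrow> real"
  assumes sigma_pos: "0 < sigma2" and g_pos: "\<And>i j. 0 < g i j" and "0 < B" "0 < t"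
    and part: "is_partition gt m gam"
    and S_le: "sinr sigma2 g (\<lambda>k. exp (q $ k)) i j \<le> gt"
    and fhat_le: "\<And>l. l \<in> {1..m} \<Longrightarrow>
      fhat sigma2 g (bcoef gam l) q u i j \<le> ln (B * acoef gam l / t) / bcoef gam l"
  shows "t \<le> exp (u $ i $ j) * B * log 2 (1 + sinr sigma2 g (\<lambda>k. exp (q $ k)) i j)"
proof -
  define S where "S = sinr sigma2 g (\<lambda>k. exp (q $ k)) i j"
  have "0 < S"
    unfolding S_def using sinr_pos[of sigma2 g] sigma_pos g_pos by simp
  then obtain l where l: "l \<in> {1..m}" "gam l \<le> S" "S \<le> gam (Suc l)"
    using ex_cell_containing[of m gam S] part S_le by (auto simp: is_partition_def S_def)
  define a where "a = acoef gam l"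
  define b where "b = bcoef gam l"
  have "0 < a" "0 < b"
    using acoef_pos[OF part] bcoef_pos[OF part l(1)] by (simp_all add: a_def b_def)
  have "- (u $ i $ j / b) - ln S \<le> ln (B * a / t) / b"
    using fhat_le[OF l(1)] fhat_eq_minus_ln_sinr[of sigma2 g, OF sigma_pos g_pos] by (simp add: S_def a_def b_def)
  then have "b * (- (u $ i $ j / b) - ln S) \<le> ln (B * a / t)"
    using \<open>0 < b\<close> by (simp add: pos_le_divide_eq mult.commute)
  then have "ln t \<le> u $ i $ j + ln B + ln a + b * ln S"
    using \<open>0 < b\<close> \<open>0 < a\<close> \<open>0 < B\<close> \<open>0 < t\<close> by (simp add: algebra_simps ln_div ln_mult)
  also have "\<dots> = ln (exp (u $ i $ j) * B * phi gam l S)"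
    using \<open>0 < a\<close> \<open>0 < B\<close> \<open>0 < S\<close> by (simp add: phi_def a_def b_def ln_mult ln_powr)
  finally have "t \<le> exp (u $ i $ j) * B * phi gam l S"
    using \<open>0 < t\<close> \<open>0 < a\<close> \<open>0 < B\<close> \<open>0 < S\<close> by (simp add: phi_def a_def)
  also have "\<dots> \<le> exp (u $ i $ j) * B * log 2 (1 + S)"
    using phi_le_log2[OF part l] \<open>0 < B\<close> by simp
  finally show ?thesis
    unfolding S_def .
qed

lemma ex_zero_if_sum_less_card:
  fixes f :: "'a \<Rightarrow> nat"
  assumes "finite A" "\<And>x. x \<in> A \<Longrightarrow> f x \<le> 1" "sum f A < card A"
  shows "\<exists>x\<in>A. f x = 0"
proof (rule ccontr)
  assume "\<not> ?thesis"
  then have "f x = 1" if "x \<in> A" for x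
    using assms(2)[OF that] that by fastforce
  then have "sum f A = card A"
    by simp
  with assms(3) show False
    by simp
qed

lemma demand_le_total_rate:
  fixes g :: "'n::finite \<Rightarrow> 'N::finite \<Rightarrow> real" and zbar :: "'n \<Rightarrow> 'N \<Rightarrow> nat"
  assumes sigma_pos: "0 < sigma2" and g_pos: "\<And>i j. 0 < g i j" and B_pos: "\<And>j. 0 < B j"
    and "0 < t i" and part: "is_partition gt m gam"
    and zbar01: "\<And>j. zbar i j \<in> {0, 1}" and zbar_sum: "(\<Sum>j\<in>UNIV. zbar i j) = CARD('N) - 1"
    and S_le: "\<And>j. sinr sigma2 g (\<lambda>k. exp (q $ k)) i j \<le> gt"
    and fhat_le: "\<And>l j. l \<in> {1..m} \<Longrightarrow> fhat sigma2 g (bcoef gam l) q u i j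
      \<le> ln (B j * acoef gam l / t i) / bcoef gam l + M * real (zbar i j)"
  shows "t i \<le> (\<Sum>j\<in>UNIV. exp (u $ i $ j) * B j
    * log 2 (1 + sinr sigma2 g (\<lambda>k. exp (q $ k)) i j) * (1 - real (zbar i j)))"
proof -
  let ?S = "sinr sigma2 g (\<lambda>k. exp (q $ k))"
  have zbar_le: "zbar i j \<le> 1" for j
    using zbar01[of j] by auto
  have rate_nonneg: "0 \<le> log 2 (1 + ?S i j)" for j
    using sinr_pos[of sigma2 g "\<lambda>k. exp (q $ k)" i j] sigma_pos g_pos by simp
  have "\<exists>j\<in>UNIV. zbar i j = 0"
    using zbar_sum by (intro ex_zero_if_sum_less_card zbar_le) simp_all
  then obtain j where j: "zbar i j = 0"
    by blast
  have "t i \<le> exp (u $ i $ j) * B j * log 2 (1 + ?S i j)"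
    using fhat_le[of _ j] j
    by (intro demand_le_rate[of sigma2 g, OF sigma_pos g_pos B_pos \<open>0 < t i\<close> part S_le]) simp
  also have "\<dots> = exp (u $ i $ j) * B j * log 2 (1 + ?S i j) * (1 - real (zbar i j))"
    using j by simp
  also have "\<dots> \<le> (\<Sum>j\<in>UNIV. exp (u $ i $ j) * B j * log 2 (1 + ?S i j) * (1 - real (zbar i j)))"
    using zbar_le B_pos rate_nonneg
    by (intro member_le_sum mult_nonneg_nonneg) (auto intro: less_imp_le)
  finally show ?thesis .
qed

section \<open>Vanishing approximation error\<close>

lemma log2_one_plus_diff_le:
  fixes y z :: real
  assumes "0 \<le> z" "z \<le> y"
  shows "log 2 (1 + y) - log 2 (1 + z) \<le> (y - z) / ln 2"
proof -
  have "log 2 (1 + y) - log 2 (1 + z) = ln ((1 + y) / (1 + z)) / ln 2"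
    using assms by (simp add: log_def ln_div diff_divide_distrib)
  also have "\<dots> \<le> ((1 + y) / (1 + z) - 1) / ln 2"
    using assms by (intro divide_right_mono ln_le_minus_one) auto
  also have "(1 + y) / (1 + z) - 1 = (y - z) / (1 + z)"
    using assms by (simp add: field_simps)
  also have "\<dots> \<le> (y - z) / 1"
    using assms by (intro divide_left_mono) auto
  finally show ?thesis
    by (simp add: divide_right_mono)
qed

lemma log2_minus_phi_le_mesh:
  assumes part: "is_partition gt m gam" and l: "l \<in> {1..m}" and x: "0 \<le> x"
  shows "log 2 (1 + x) - phi gam l x \<le> mesh m gam / ln 2"
proof -
  have cell: "0 < gam (Suc l) - gam l" "gam (Suc l) - gam l \<le> mesh m gam"
    using is_partition_less[OF part, of l "Suc l"] l unfolding mesh_def by (auto intro: Max_ge)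
  show ?thesis
  proof (cases "gam l \<le> x \<and> x \<le> gam (Suc l)")
    case True
    have "0 \<le> gam l"
      using is_partition_nonneg[OF part] l by simp
    with True have "log 2 (1 + x) \<le> log 2 (1 + gam (Suc l))"
      and "log 2 (1 + gam l) \<le> phi gam l x"
      using phi_mono[OF part l, of "gam l" x] phi_at_lower_node[OF part l] by simp_all
    then have "log 2 (1 + x) - phi gam l x \<le> log 2 (1 + gam (Suc l)) - log 2 (1 + gam l)"
      by linarith
    also have "\<dots> \<le> (gam (Suc l) - gam l) / ln 2"
      using \<open>0 \<le> gam l\<close> cell by (intro log2_one_plus_diff_le) auto
    also have "\<dots> \<le> mesh m gam / ln 2"
      using cell by (simp add: divide_right_mono)
    finally show ?thesis .
  next
    case False
    then have "log 2 (1 + x) - phi gam l x \<le> 0"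
      using log2_le_phi[OF part l x] by auto
    also have "0 \<le> mesh m gam / ln 2"
      using cell by simp
    finally show ?thesis .
  qed
qed

lemma log2_minus_min_phi_le_mesh:
  assumes part: "is_partition gt m gam" and x: "0 \<le> x"
  shows "log 2 (1 + x) - Min ((\<lambda>l. phi gam l x) ` {1..m}) \<le> mesh m gam / ln 2"
proof -
  have "{1..m} \<noteq> {}"
    using part by (simp add: is_partition_def)
  then have "Min ((\<lambda>l. phi gam l x) ` {1..m}) \<in> (\<lambda>l. phi gam l x) ` {1..m}"
    by (intro Min_in) auto
  then obtain l where "l \<in> {1..m}" "Min ((\<lambda>l. phi gam l x) ` {1..m}) = phi gam l x"
    by auto
  then show ?thesis
    using log2_minus_phi_le_mesh[OF part _ x] by simp
qed

lemma sup_log2_minus_min_phi_bounds: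
  assumes part: "is_partition gt m gam"
  defines "err \<equiv> SUP x\<in>{0..gt}. log 2 (1 + x) - Min ((\<lambda>l. phi gam l x) ` {1..m})"
  shows "0 \<le> err" "err \<le> mesh m gam / ln 2"
proof -
  have "gam 1 < gam (m + 1)"
    using is_partition_less[OF part, of 1 "m + 1"] part by (simp add: is_partition_def)
  then have "0 \<in> {0..gt}"
    using part by (simp add: is_partition_def)
  have "{1..m} \<noteq> {}"
    using part by (simp add: is_partition_def)
  then have "(\<lambda>l. phi gam l 0) ` {1..m} = {0}"
    by (auto simp: phi_def)
  then have "0 = log 2 (1 + 0) - Min ((\<lambda>l. phi gam l 0) ` {1..m})"
    by simp
  also have "\<dots> \<le> err"
    unfolding err_def using \<open>0 \<in> {0..gt}\<close> log2_minus_min_phi_le_mesh[OF part]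
    by (intro cSUP_upper bdd_aboveI2) auto
  finally show "0 \<le> err" .
  show "err \<le> mesh m gam / ln 2"
    unfolding err_def using \<open>0 \<in> {0..gt}\<close> log2_minus_min_phi_le_mesh[OF part]
    by (intro cSUP_least) auto
qed

lemma sup_log2_minus_min_phi_tendsto_zero:
  assumes parts: "\<And>k. is_partition gt (ms k) (gs k)"
    and mesh: "(\<lambda>k. mesh (ms k) (gs k)) \<longlonglongrightarrow> 0"
  shows "(\<lambda>k. SUP x\<in>{0..gt}. log 2 (1 + x) - Min ((\<lambda>l. phi (gs k) l x) ` {1..ms k})) \<longlonglongrightarrow> 0"
proof (rule tendsto_sandwich[OF _ _ tendsto_const])
  show "(\<lambda>k. mesh (ms k) (gs k) / ln 2) \<longlonglongrightarrow> 0"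
    using tendsto_divide_zero[OF mesh] by simp
qed (use sup_log2_minus_min_phi_bounds[OF parts] in auto)

theorem theorem1:
  fixes sigma2 gt :: real
    and B :: "'N::finite \<Rightarrow> real"
    and g :: "'n::finite \<Rightarrow> 'N \<Rightarrow> real"
    and t :: "'n \<Rightarrow> real"
    and m :: nat and gam :: "nat \<Rightarrow> real"
  assumes sigma_pos: "sigma2 > 0"
    and B_pos: "\<And>j. B j > 0"
    and g_pos: "\<And>i j. g i j > 0"
    and t_pos: "\<And>i. t i > 0"
    and gt_pos: "gt > 0"
    and part: "is_partition gt m gam"
  shows
    "(\<forall>l\<in>{1..m}. \<forall>i j.
        convex_on UNIV (\<lambda>p :: (real^'N) \<times> (real^'N^'n).
           fhat sigma2 g (bcoef gam l) (fst p) (snd p) i j))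
     \<and>
     (\<forall>(M::real) (zbar :: 'n \<Rightarrow> 'N \<Rightarrow> nat) (q :: real^'N) (u :: real^'N^'n).
        M > 0 \<longrightarrow>
        (\<forall>i j. zbar i j \<in> {0, 1}) \<longrightarrow>
        (\<forall>i. (\<Sum>j\<in>UNIV. zbar i j) = CARD('N) - 1) \<longrightarrow>
        (\<forall>i j. sinr sigma2 g (\<lambda>k. exp (q $ k)) i j \<le> gt) \<longrightarrow>
        (\<forall>l\<in>{1..m}. \<forall>i j.
           fhat sigma2 g (bcoef gam l) q u i j
             \<le> ln (B j * acoef gam l / t i) / bcoef gam l + M * real (zbar i j)) \<longrightarrow>
        (\<forall>i. (\<Sum>j\<in>UNIV. exp (u $ i $ j) * B j
                 * log 2 (1 + sinr sigma2 g (\<lambda>k. exp (q $ k)) i j)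
                 * (1 - real (zbar i j))) \<ge> t i))
     \<and>
     (\<forall>(ms :: nat \<Rightarrow> nat) (gs :: nat \<Rightarrow> nat \<Rightarrow> real).
        (\<forall>k. is_partition gt (ms k) (gs k)) \<longrightarrow>
        (\<lambda>k. mesh (ms k) (gs k)) \<longlonglongrightarrow> 0 \<longrightarrow>
        (\<lambda>k. SUP x\<in>{0..gt}. log 2 (1 + x) - Min ((\<lambda>l. phi (gs k) l x) ` {1..ms k}))
          \<longlonglongrightarrow> 0)"
proof (intro conjI allI impI ballI)
  fix l i j
  show "convex_on UNIV (\<lambda>p :: (real^'N) \<times> (real^'N^'n). fhat sigma2 g (bcoef gam l) (fst p) (snd p) i j)"
    using fhat_convex[of sigma2 g] sigma_pos g_pos by blast
next
  fix M :: real and zbar :: "'n \<Rightarrow> 'N \<Rightarrow> nat" and q :: "real^'N" and u :: "real^'N^'n" and i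
  assume "\<forall>i j. zbar i j \<in> {0, 1}" "\<forall>i. (\<Sum>j\<in>UNIV. zbar i j) = CARD('N) - 1"
    "\<forall>i j. sinr sigma2 g (\<lambda>k. exp (q $ k)) i j \<le> gt"
    "\<forall>l\<in>{1..m}. \<forall>i j. fhat sigma2 g (bcoef gam l) q u i j
      \<le> ln (B j * acoef gam l / t i) / bcoef gam l + M * real (zbar i j)"
  then show "t i \<le> (\<Sum>j\<in>UNIV. exp (u $ i $ j) * B j
      * log 2 (1 + sinr sigma2 g (\<lambda>k. exp (q $ k)) i j) * (1 - real (zbar i j)))"
    by (intro demand_le_total_rate[of sigma2 g, where M = M, OF sigma_pos g_pos B_pos t_pos part]) auto
qed (rule sup_log2_minus_min_phi_tendsto_zero; simp)

end
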